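(* Let $(x_n)_{n\in\mathbb{N}}$ be a strictly increasing sequence of nonnegative reals with $x_0=0$, $x_0!=1$, $x_n!=x_1\cdots x_n$, and let $\mathcal{N}(t)=\sum_{n\ge 0}t^n/x_n!$ have radius of convergence $R>0$. For $z\in\mathbb{C}$ with $|z|^2<R$ and $t\in\mathbb{R}$ define $$\check z(t)=\frac{z}{\mathcal{N}(|z|^2)}\sum_{n=0}^{\infty}\frac{|z|^{2n}}{x_n!}\exp\big(i(x_{n+2}-x_{n+1})t\big).$$ Then $|\check z(t)|\le |z|$ for all $t\in\mathbb{R}$.
   Context: $\check z(t)$ is the coherent-state expectation (lower symbol) of the time-evolved lowering operator under the Hamiltonian with spectrum $(x_{n+1})$, i.e. the semi-classical phase-space trajectory. *)

theory Defs
  imports "HOL-Analysis.Analysis"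
begin

definition xfact :: "(nat \<Rightarrow> real) \<Rightarrow> nat \<Rightarrow> real" where
  "xfact x n = (\<Prod>k\<in>{1..n}. x k)"

definition NN :: "(nat \<Rightarrow> real) \<Rightarrow> real \<Rightarrow> real" where
  "NN x t = (\<Sum>n. t ^ n / xfact x n)"

definition radiusN :: "(nat \<Rightarrow> real) \<Rightarrow> ereal" where
  "radiusN x = conv_radius (\<lambda>n. 1 / xfact x n)"

definition zcheck :: "(nat \<Rightarrow> real) \<Rightarrow> complex \<Rightarrow> real \<Rightarrow> complex" where
  "zcheck x z t = z / complex_of_real (NN x ((cmod z)\<^sup>2)) *
     (\<Sum>n. complex_of_real ((cmod z) ^ (2 * n) / xfact x n) *
          exp (\<i> * complex_of_real ((x (n + 2) - x (n + 1)) * t)))"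

end

theory Submission
  imports Defs
begin

text \<open>Up to the factor \<open>z\<close>, \<open>zcheck x z t\<close> is an average of unit phases
  \<open>exp (\<i> \<theta>\<^sub>n)\<close> with the positive weights \<open>|z|\<^sup>2\<^sup>n / x\<^sub>n!\<close>, normalised by their sum
  \<open>NN x |z|\<^sup>2\<close>; the triangle inequality for series bounds such an average by 1.\<close>

lemma xfact_pos:
  assumes "strict_mono x" and "x 0 = 0"
  shows "xfact x n > 0"
  unfolding xfact_def
proof (rule prod_pos)
  fix k assume "k \<in> {1..n}"
  then have "x 0 < x k" using \<open>strict_mono x\<close> by (simp add: strict_mono_def)
  then show "x k > 0" using \<open>x 0 = 0\<close> by simp
qed

lemma summable_NN:
  assumes "ereal \<bar>s\<bar> < radiusN x"
  shows "summable (\<lambda>n. s ^ n / xfact x n)"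
proof -
  have "summable (\<lambda>n. 1 / xfact x n * s ^ n)"
    by (rule summable_in_conv_radius) (use assms in \<open>simp add: radiusN_def\<close>)
  then show ?thesis by simp
qed

lemma NN_pos:
  assumes "strict_mono x" and "x 0 = 0" and "s \<ge> 0" and "ereal s < radiusN x"
  shows "NN x s > 0"
  unfolding NN_def
proof (rule suminf_pos2[where i = 0])
  show "summable (\<lambda>n. s ^ n / xfact x n)"
    using assms by (intro summable_NN) simp
  show "s ^ n / xfact x n \<ge> 0" for n
    using xfact_pos[OF assms(1,2)] \<open>s \<ge> 0\<close> by (simp add: less_imp_le)
qed (simp add: xfact_def)

lemma norm_suminf_weighted_phases_le:
  fixes w \<theta> :: "nat \<Rightarrow> real"
  assumes "summable w" and "\<And>n. w n \<ge> 0"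
  shows "norm (\<Sum>n. complex_of_real (w n) * exp (\<i> * complex_of_real (\<theta> n))) \<le> (\<Sum>n. w n)"
proof -
  have norm_eq: "(\<lambda>n. norm (complex_of_real (w n) * exp (\<i> * complex_of_real (\<theta> n)))) = w"
    using assms(2) by (simp add: norm_mult)
  show ?thesis
    using summable_norm[of "\<lambda>n. complex_of_real (w n) * exp (\<i> * complex_of_real (\<theta> n))"]
          assms(1)
    unfolding norm_eq by simp
qed

theorem mainTheorem4:
  fixes x :: "nat \<Rightarrow> real" and z :: complex and t :: real
  assumes mono: "strict_mono x"
    and nonneg: "\<And>n. x n \<ge> 0"
    and x0: "x 0 = 0"
    and Rpos: "radiusN x > 0"
    and zR: "ereal ((cmod z)\<^sup>2) < radiusN x"
  shows "cmod (zcheck x z t) \<le> cmod z"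
proof -
  define w where "w n = (cmod z) ^ (2 * n) / xfact x n" for n
  have w_eq: "w = (\<lambda>n. ((cmod z)\<^sup>2) ^ n / xfact x n)"
    by (simp add: w_def fun_eq_iff power_mult)
  have "summable w"
    unfolding w_eq using zR by (intro summable_NN) simp
  moreover have "w n \<ge> 0" for n
    using xfact_pos[OF mono x0, of n] by (simp add: w_def less_imp_le)
  moreover have "(\<Sum>n. w n) = NN x ((cmod z)\<^sup>2)"
    by (simp add: NN_def w_eq)
  ultimately have phases_le:
    "norm (\<Sum>n. complex_of_real (w n) * exp (\<i> * complex_of_real ((x (n + 2) - x (n + 1)) * t)))
       \<le> NN x ((cmod z)\<^sup>2)"
    using norm_suminf_weighted_phases_le[of w] by metis
  have N_pos: "NN x ((cmod z)\<^sup>2) > 0"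
    using NN_pos[OF mono x0 _ zR] by simp
  have "cmod (zcheck x z t) = cmod z / NN x ((cmod z)\<^sup>2) *
      norm (\<Sum>n. complex_of_real (w n) * exp (\<i> * complex_of_real ((x (n + 2) - x (n + 1)) * t)))"
    using N_pos by (simp add: zcheck_def w_def norm_mult norm_divide)
  also have "\<dots> \<le> cmod z / NN x ((cmod z)\<^sup>2) * NN x ((cmod z)\<^sup>2)"
    using phases_le N_pos by (intro mult_left_mono) auto
  also have "\<dots> = cmod z"
    using N_pos by simp
  finally show ?thesis .
qed

end
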